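(* Let $X$ be a topological space in which every $\Lambda$-set is a $G_\delta$-set, and suppose that for each pair of disjoint $G_\delta$-sets $G_0,G_1$ in $X$ there exist $F_\sigma$-sets $F_0,F_1$ with $G_0\subseteq F_0$, $G_1\subseteq F_1$ and $F_0\cap F_1=\varnothing$. Let $g,f:X\to\mathbb{R}$ be functions such that $f$ is lower semi-Baire-one, $g$ is upper semi-Baire-one, and $g\le f$. Then there exists a Baire-one function $h:X\to\mathbb{R}$ such that $g\le h\le f$.
   Context: A $\Lambda$-set in $X$ is an intersection of open sets. A function $f:X\to\mathbb{R}$ is upper semi-Baire-one (resp. lower semi-Baire-one) if $f^{-1}(-\infty,t)$ (resp. $f^{-1}(t,+\infty)$) is an $F_\sigma$-set in $X$ for every real $t$. A function $h:X\to\mathbb{R}$ is Baire-one if the preimage of every open subset of $\mathbb{R}$ is an $F_\sigma$-set in $X$. $g\le f$ means $g(x)\le f(x)$ for all $x\in X$. *)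

theory Defs
  imports "HOL-Analysis.Analysis"
begin

text \<open>A Lambda-set: an intersection of (an arbitrary family of) open sets of X,
  taken inside the space (the empty intersection is the whole space).\<close>
definition lambda_set_in :: "'a topology \<Rightarrow> 'a set \<Rightarrow> bool" where
  "lambda_set_in X \<equiv> ((\<lambda>_. True) intersection_of openin X) relative_to topspace X"

definition upper_semi_baire_one :: "'a topology \<Rightarrow> ('a \<Rightarrow> real) \<Rightarrow> bool" where
  "upper_semi_baire_one X f \<longleftrightarrow> (\<forall>t::real. fsigma_in X {x \<in> topspace X. f x < t})"

definition lower_semi_baire_one :: "'a topology \<Rightarrow> ('a \<Rightarrow> real) \<Rightarrow> bool" where
  "lower_semi_baire_one X f \<longleftrightarrow> (\<forall>t::real. fsigma_in X {x \<in> topspace X. t < f x})"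

definition baire_one :: "'a topology \<Rightarrow> ('a \<Rightarrow> real) \<Rightarrow> bool" where
  "baire_one X h \<longleftrightarrow> (\<forall>U::real set. open U \<longrightarrow> fsigma_in X {x \<in> topspace X. h x \<in> U})"

end

theory Submission
  imports Defs
begin

text \<open>Write \<open>y \<preceq> x\<close> for \<open>y \<in> X closure_of {x}\<close>. Every \<open>F\<^sub>\<sigma>\<close>-set is closed downwards under \<open>\<preceq>\<close>,
  and the complement of a downward closed set is a \<open>\<Lambda>\<close>-set; so under the first hypothesis every
  function that is constant along \<open>\<preceq>\<close> is Baire-one, while lower (upper) semi-Baire-one functions
  are increasing (decreasing) along \<open>\<preceq>\<close>. The generizations \<open>{e. c \<preceq> e}\<close> of a point form a
  \<open>\<Lambda>\<close>-set, hence a \<open>G\<^sub>\<delta>\<close>-set, and separating two disjoint such sets by \<open>F\<^sub>\<sigma>\<close>-sets shows that two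
  points with a common specialization have a common generization. Hence ``having a common
  generization'' is an equivalence relation whose classes are closed under \<open>\<preceq>\<close> in both
  directions, and \<open>g y \<le> g c \<le> f c \<le> f x\<close> whenever \<open>x, y \<preceq> c\<close>. The supremum of \<open>g\<close> over the
  class of \<open>x\<close> is the required \<open>h\<close>.\<close>

lemma in_closure_of_singleton_imp_topspace:
  "y \<in> X closure_of {x} \<Longrightarrow> x \<in> topspace X"
  using closure_of_eq_empty_gen[where S = "{x}"] by auto

lemma in_closure_of_singleton_self:
  "x \<in> topspace X \<Longrightarrow> x \<in> X closure_of {x}"
  by (meson closure_of_subset empty_subsetI insert_subset)

lemma in_closure_of_singleton_trans:
  assumes "y \<in> X closure_of {x}" "x \<in> X closure_of {z}"
  shows "y \<in> X closure_of {z}"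
proof -
  have "X closure_of {x} \<subseteq> X closure_of {z}"
    using assms(2) by (simp add: closure_of_minimal)
  with assms(1) show ?thesis
    by blast
qed

lemma closure_of_singleton_subset_fsigma:
  assumes "fsigma_in X F" "x \<in> F"
  shows "X closure_of {x} \<subseteq> F"
proof -
  obtain \<C> where "\<C> \<subseteq> Collect (closedin X)" "\<Union>\<C> = F"
    using assms(1) unfolding fsigma_in_def union_of_def by blast
  then obtain C where "closedin X C" "x \<in> C" "C \<subseteq> F"
    using assms(2) by blast
  then show ?thesis
    by (meson closure_of_minimal empty_subsetI insert_subset order_trans)
qed

lemma lambda_set_in_topspace_diff_if_closed_under_specialization:
  assumes "D \<subseteq> topspace X" and closed: "\<And>x. x \<in> D \<Longrightarrow> X closure_of {x} \<subseteq> D"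
  shows "lambda_set_in X (topspace X - D)"
proof -
  define \<U> where "\<U> = (\<lambda>x. topspace X - X closure_of {x}) ` D"
  have "x \<in> X closure_of {x}" if "x \<in> D" for x
    using that \<open>D \<subseteq> topspace X\<close> by (auto intro: in_closure_of_singleton_self)
  then have "topspace X \<inter> \<Inter>\<U> = topspace X - D"
    using closed by (auto simp: \<U>_def)
  moreover have "\<U> \<subseteq> Collect (openin X)"
    by (auto simp: \<U>_def)
  ultimately show ?thesis
    unfolding lambda_set_in_def relative_to_def intersection_of_def by blast
qed

definition lambda_sets_gdelta :: "'a topology \<Rightarrow> bool" where
  "lambda_sets_gdelta X \<longleftrightarrow> (\<forall>S. lambda_set_in X S \<longrightarrow> gdelta_in X S)"

definition gdelta_sets_fsigma_separated :: "'a topology \<Rightarrow> bool" where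
  "gdelta_sets_fsigma_separated X \<longleftrightarrow>
    (\<forall>G0 G1. gdelta_in X G0 \<longrightarrow> gdelta_in X G1 \<longrightarrow> G0 \<inter> G1 = {} \<longrightarrow>
      (\<exists>F0 F1. fsigma_in X F0 \<and> fsigma_in X F1 \<and> G0 \<subseteq> F0 \<and> G1 \<subseteq> F1 \<and> F0 \<inter> F1 = {}))"

lemma fsigma_in_if_closed_under_specialization:
  assumes "lambda_sets_gdelta X"
    and "D \<subseteq> topspace X" and "\<And>x. x \<in> D \<Longrightarrow> X closure_of {x} \<subseteq> D"
  shows "fsigma_in X D"
proof -
  have "lambda_set_in X (topspace X - D)"
    using assms(2,3) by (rule lambda_set_in_topspace_diff_if_closed_under_specialization)
  then show ?thesis
    using assms(1,2) by (simp add: lambda_sets_gdelta_def fsigma_in_gdelta_in)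
qed

lemma baire_one_if_invariant_under_specialization:
  assumes "lambda_sets_gdelta X"
    and inv: "\<And>x y. y \<in> X closure_of {x} \<Longrightarrow> h y = h x"
  shows "baire_one X h"
  unfolding baire_one_def
proof (intro allI impI)
  fix U :: "real set"
  have "X closure_of {x} \<subseteq> {x \<in> topspace X. h x \<in> U}" if "h x \<in> U" for x
  proof
    fix y
    assume y: "y \<in> X closure_of {x}"
    then have "y \<in> topspace X"
      by (meson closure_of_subset_topspace subsetD)
    with inv[OF y] that show "y \<in> {x \<in> topspace X. h x \<in> U}"
      by simp
  qed
  then show "fsigma_in X {x \<in> topspace X. h x \<in> U}"
    by (intro fsigma_in_if_closed_under_specialization[OF assms(1)]) auto
qed

lemma lower_semi_baire_one_mono_specialization:
  assumes "lower_semi_baire_one X f" "y \<in> X closure_of {x}"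
  shows "f x \<le> f y"
proof (rule ccontr)
  let ?F = "{z \<in> topspace X. f y < f z}"
  assume "\<not> f x \<le> f y"
  then have "x \<in> ?F"
    using in_closure_of_singleton_imp_topspace[OF assms(2)] by simp
  moreover have "fsigma_in X ?F"
    using assms(1) unfolding lower_semi_baire_one_def by blast
  ultimately have "X closure_of {x} \<subseteq> ?F"
    by (intro closure_of_singleton_subset_fsigma)
  with assms(2) have "y \<in> ?F"
    by (rule subsetD[rotated])
  then show False
    by simp
qed

lemma upper_semi_baire_one_antimono_specialization:
  assumes "upper_semi_baire_one X g" "y \<in> X closure_of {x}"
  shows "g y \<le> g x"
proof (rule ccontr)
  let ?F = "{z \<in> topspace X. g z < g y}"
  assume "\<not> g y \<le> g x"
  then have "x \<in> ?F"
    using in_closure_of_singleton_imp_topspace[OF assms(2)] by simp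
  moreover have "fsigma_in X ?F"
    using assms(1) unfolding upper_semi_baire_one_def by blast
  ultimately have "X closure_of {x} \<subseteq> ?F"
    by (intro closure_of_singleton_subset_fsigma)
  with assms(2) have "y \<in> ?F"
    by (rule subsetD[rotated])
  then show False
    by simp
qed

lemma gdelta_in_generizations:
  assumes "lambda_sets_gdelta X"
  shows "gdelta_in X {e \<in> topspace X. c \<in> X closure_of {e}}"
proof -
  let ?D = "{e \<in> topspace X. c \<notin> X closure_of {e}}"
  have "X closure_of {x} \<subseteq> ?D" if "x \<in> ?D" for x
  proof
    fix y
    assume y: "y \<in> X closure_of {x}"
    then have "y \<in> topspace X"
      by (meson closure_of_subset_topspace subsetD)
    moreover have "c \<notin> X closure_of {y}"
      using that in_closure_of_singleton_trans[OF _ y] by blast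
    ultimately show "y \<in> ?D"
      by blast
  qed
  then have "lambda_set_in X (topspace X - ?D)"
    by (intro lambda_set_in_topspace_diff_if_closed_under_specialization) auto
  moreover have "topspace X - ?D = {e \<in> topspace X. c \<in> X closure_of {e}}"
    by blast
  ultimately show ?thesis
    using assms unfolding lambda_sets_gdelta_def by simp
qed

lemma common_generization_if_common_specialization:
  assumes "lambda_sets_gdelta X" "gdelta_sets_fsigma_separated X"
    and y1: "y \<in> X closure_of {c1}" and y2: "y \<in> X closure_of {c2}"
  shows "\<exists>e. c1 \<in> X closure_of {e} \<and> c2 \<in> X closure_of {e}"
proof (rule ccontr)
  define G where "G c = {e \<in> topspace X. c \<in> X closure_of {e}}" for c
  assume "\<nexists>e. c1 \<in> X closure_of {e} \<and> c2 \<in> X closure_of {e}"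
  then have disjoint: "G c1 \<inter> G c2 = {}"
    unfolding G_def by blast
  have gdelta: "gdelta_in X (G c)" for c
    unfolding G_def using assms(1) by (rule gdelta_in_generizations)
  obtain F1 F2 where F: "fsigma_in X F1" "fsigma_in X F2" "G c1 \<subseteq> F1" "G c2 \<subseteq> F2"
    "F1 \<inter> F2 = {}"
    using assms(2)[unfolded gdelta_sets_fsigma_separated_def, rule_format, OF gdelta gdelta disjoint]
    by blast
  have "c1 \<in> G c1" "c2 \<in> G c2"
    using in_closure_of_singleton_imp_topspace[OF y1] in_closure_of_singleton_imp_topspace[OF y2]
    by (simp_all add: G_def in_closure_of_singleton_self)
  then have "c1 \<in> F1" "c2 \<in> F2"
    using F(3,4) by blast+
  then have "y \<in> F1" "y \<in> F2"
    using subsetD[OF closure_of_singleton_subset_fsigma[OF F(1)] y1]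
      subsetD[OF closure_of_singleton_subset_fsigma[OF F(2)] y2] by blast+
  with F(5) show False
    by blast
qed

definition common_generization :: "'a topology \<Rightarrow> 'a \<Rightarrow> 'a \<Rightarrow> bool" where
  "common_generization X x y \<longleftrightarrow> (\<exists>c. x \<in> X closure_of {c} \<and> y \<in> X closure_of {c})"

lemma common_generization_trans:
  assumes "lambda_sets_gdelta X" "gdelta_sets_fsigma_separated X"
    and "common_generization X x y" "common_generization X y z"
  shows "common_generization X x z"
proof -
  obtain c d where x: "x \<in> X closure_of {c}" and yc: "y \<in> X closure_of {c}"
    and yd: "y \<in> X closure_of {d}" and z: "z \<in> X closure_of {d}"
    using assms(3,4) unfolding common_generization_def by blast
  obtain e where "c \<in> X closure_of {e}" "d \<in> X closure_of {e}"
    using common_generization_if_common_specialization[OF assms(1,2) yc yd] by blast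
  then have "x \<in> X closure_of {e}" "z \<in> X closure_of {e}"
    using in_closure_of_singleton_trans[OF x] in_closure_of_singleton_trans[OF z] by simp_all
  then show ?thesis
    unfolding common_generization_def by blast
qed

lemma common_generization_class_eq:
  assumes "lambda_sets_gdelta X" "gdelta_sets_fsigma_separated X"
    and "y \<in> X closure_of {x}"
  shows "{z. common_generization X y z} = {z. common_generization X x z}"
proof -
  have "x \<in> X closure_of {x}"
    using in_closure_of_singleton_imp_topspace[OF assms(3)] by (rule in_closure_of_singleton_self)
  then have yx: "common_generization X y x" and xy: "common_generization X x y"
    using assms(3) unfolding common_generization_def by blast+
  show ?thesis
  proof (rule Collect_cong)
    fix z
    show "common_generization X y z \<longleftrightarrow> common_generization X x z"
      using common_generization_trans[OF assms(1,2) yx, of z]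
        common_generization_trans[OF assms(1,2) xy, of z] by blast
  qed
qed

lemma common_generization_bound:
  assumes "lower_semi_baire_one X f" "upper_semi_baire_one X g"
    and "\<forall>x\<in>topspace X. g x \<le> f x" and "common_generization X x y"
  shows "g y \<le> f x"
proof -
  obtain c where c: "x \<in> X closure_of {c}" "y \<in> X closure_of {c}"
    using assms(4) unfolding common_generization_def by blast
  then have "g c \<le> f c"
    using assms(3) in_closure_of_singleton_imp_topspace[OF c(1)] by blast
  moreover have "g y \<le> g c"
    using assms(2) c(2) by (rule upper_semi_baire_one_antimono_specialization)
  moreover have "f c \<le> f x"
    using assms(1) c(1) by (rule lower_semi_baire_one_mono_specialization)
  ultimately show ?thesis
    by linarith
qed

theorem corollary3:
  fixes X :: "'a topology" and f g :: "'a \<Rightarrow> real"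
  assumes lam: "\<And>S. lambda_set_in X S \<Longrightarrow> gdelta_in X S"
    and sep: "\<And>G0 G1. \<lbrakk>gdelta_in X G0; gdelta_in X G1; G0 \<inter> G1 = {}\<rbrakk> \<Longrightarrow>
        \<exists>F0 F1. fsigma_in X F0 \<and> fsigma_in X F1 \<and> G0 \<subseteq> F0 \<and> G1 \<subseteq> F1 \<and> F0 \<inter> F1 = {}"
    and f: "lower_semi_baire_one X f"
    and g: "upper_semi_baire_one X g"
    and gf: "\<forall>x\<in>topspace X. g x \<le> f x"
  shows "\<exists>h. baire_one X h \<and> (\<forall>x\<in>topspace X. g x \<le> h x \<and> h x \<le> f x)"
proof -
  have X: "lambda_sets_gdelta X" "gdelta_sets_fsigma_separated X"
    using lam sep unfolding lambda_sets_gdelta_def gdelta_sets_fsigma_separated_def by simp_all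
  define h where "h x = Sup (g ` {y. common_generization X x y})" for x
  have "h y = h x" if "y \<in> X closure_of {x}" for x y
    using common_generization_class_eq[OF X that] by (simp add: h_def)
  then have "baire_one X h"
    by (rule baire_one_if_invariant_under_specialization[OF X(1)])
  moreover have "g x \<le> h x \<and> h x \<le> f x" if "x \<in> topspace X" for x
  proof -
    have refl: "common_generization X x x"
      using in_closure_of_singleton_self[OF that] unfolding common_generization_def by blast
    have bound: "g y \<le> f x" if "common_generization X x y" for y
      using common_generization_bound[OF f g gf that] .
    then have "bdd_above (g ` {y. common_generization X x y})"
      by (intro bdd_aboveI[where M = "f x"]) blast
    then have "g x \<le> h x"
      unfolding h_def using refl by (intro cSup_upper) auto
    moreover have "h x \<le> f x"
      unfolding h_def using refl bound by (intro cSup_least) auto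
    ultimately show ?thesis ..
  qed
  ultimately show ?thesis
    by blast
qed

end
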